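(* Assume $X$ satisfies the $G$-latent model with covariance $\Sigma=ACA^t+\Gamma$. (i) If $\Delta(C)>\frac{2}{m}|\Gamma|_V$, then $B^*$ is the unique maximizer of $B\mapsto\langle\Sigma,B\rangle$ over $\mathcal{C}$. (ii) If $\Delta(C)>0$, then $B^*$ is the unique maximizer of $B\mapsto\langle\Sigma-\Gamma,B\rangle$ over $\mathcal{C}$.
   Context: Let $G=\{G_1,\dots,G_K\}$ be a partition of $[p]$ into nonempty groups, $k(a)$ the index with $a\in G_{k(a)}$, $m=\min_k|G_k|$. A centered random vector $X$ satisfies the $G$-latent model if $X_a=Z_{k(a)}+E_a$ for all $a$, where $Z\in\mathbb{R}^K$ is centered, $E\in\mathbb{R}^p$ is centered, independent of $Z$, with independent coordinates and $\mathrm{Var}(E_a)=\gamma_{k(a)}$. Then $\Sigma=\mathrm{Cov}(X)=ACA^t+\Gamma$ with $A_{ak}=1_{\{a\in G_k\}}$, $C=\mathrm{Cov}(Z)$, $\Gamma=\mathrm{diag}(\gamma_{k(a)})_a$. $\Delta(C)=\min_{j<k}(C_{jj}+C_{kk}-2C_{jk})$. For diagonal $D$, $|D|_V=\max_aD_{aa}-\min_aD_{aa}$. $B^*$ is the $p\times p$ matrix with $B^*_{ab}=1/|G_k|$ if $a,b\in G_k$ for some $k$, and $0$ otherwise. $\langle M,N\rangle=\mathrm{tr}(M^tN)$. $\mathcal{C}$ is the set of symmetric positive semidefinite $p\times p$ matrices $B$ with $\sum_aB_{ab}=1$ for all $b$, $B_{ab}\ge0$ for all $a,b$, and $\mathrm{tr}(B)=K$.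 *)

theory Defs
  imports Complex_Main
begin

text \<open>Index conventions: variables are indexed by a < p (i.e. [p] = {0..<p}),
  latent factors / groups by k < K.  Matrices are functions nat => nat => real,
  only their entries with indices in range are meaningful.\<close>

definition is_partition :: "nat \<Rightarrow> nat \<Rightarrow> (nat \<Rightarrow> nat set) \<Rightarrow> bool" where
  "is_partition p K G \<longleftrightarrow>
     (\<forall>k<K. G k \<noteq> {}) \<and> (\<forall>k<K. G k \<subseteq> {..<p}) \<and>
     (\<forall>j<K. \<forall>k<K. j \<noteq> k \<longrightarrow> G j \<inter> G k = {}) \<and>
     (\<Union>k<K. G k) = {..<p}"

definition memb :: "(nat \<Rightarrow> nat set) \<Rightarrow> nat \<Rightarrow> nat \<Rightarrow> real" where
  "memb G a k = (if a \<in> G k then 1 else 0)"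

definition ACAt :: "nat \<Rightarrow> (nat \<Rightarrow> nat set) \<Rightarrow> (nat \<Rightarrow> nat \<Rightarrow> real) \<Rightarrow> nat \<Rightarrow> nat \<Rightarrow> real" where
  "ACAt K G C a b = (\<Sum>j<K. \<Sum>k<K. memb G a j * C j k * memb G b k)"

text \<open>Gamma = diag(gamma_{k(a)}); note sum_k A a k * gamma k = gamma_{k(a)} for a partition.\<close>
definition Gamma_mat :: "nat \<Rightarrow> (nat \<Rightarrow> nat set) \<Rightarrow> (nat \<Rightarrow> real) \<Rightarrow> nat \<Rightarrow> nat \<Rightarrow> real" where
  "Gamma_mat K G \<gamma> a b = (if a = b then (\<Sum>k<K. memb G a k * \<gamma> k) else 0)"

definition latent_Sigma :: "nat \<Rightarrow> (nat \<Rightarrow> nat set) \<Rightarrow> (nat \<Rightarrow> nat \<Rightarrow> real) \<Rightarrow> (nat \<Rightarrow> real) \<Rightarrow> nat \<Rightarrow> nat \<Rightarrow> real" where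
  "latent_Sigma K G C \<gamma> a b = ACAt K G C a b + Gamma_mat K G \<gamma> a b"

definition min_group_size :: "nat \<Rightarrow> (nat \<Rightarrow> nat set) \<Rightarrow> nat" where
  "min_group_size K G = Min {card (G k) | k. k < K}"

definition var_norm :: "nat \<Rightarrow> (nat \<Rightarrow> nat \<Rightarrow> real) \<Rightarrow> real" where
  "var_norm p D = Max {D a a | a. a < p} - Min {D a a | a. a < p}"

text \<open>Delta(C) = min_{j<k} (C_jj + C_kk - 2 C_jk).  "t < Delta(C)" is stated as
  the bound holding for every pair j < k < K (this is the same as t < Min, and
  is vacuously true when K < 2, where the minimum over the empty set is +infinity).\<close>
definition Delta_gt :: "nat \<Rightarrow> (nat \<Rightarrow> nat \<Rightarrow> real) \<Rightarrow> real \<Rightarrow> bool" where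
  "Delta_gt K C t \<longleftrightarrow> (\<forall>j k. j < k \<and> k < K \<longrightarrow> t < C j j + C k k - 2 * C j k)"

definition Bstar :: "nat \<Rightarrow> (nat \<Rightarrow> nat set) \<Rightarrow> nat \<Rightarrow> nat \<Rightarrow> real" where
  "Bstar K G a b = (if \<exists>k<K. a \<in> G k \<and> b \<in> G k
                    then 1 / real (card (G (SOME k. k < K \<and> a \<in> G k \<and> b \<in> G k))) else 0)"

definition frob :: "nat \<Rightarrow> (nat \<Rightarrow> nat \<Rightarrow> real) \<Rightarrow> (nat \<Rightarrow> nat \<Rightarrow> real) \<Rightarrow> real" where
  "frob p M N = (\<Sum>a<p. \<Sum>b<p. M a b * N a b)"

definition psd_on :: "nat \<Rightarrow> (nat \<Rightarrow> nat \<Rightarrow> real) \<Rightarrow> bool" where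
  "psd_on n M \<longleftrightarrow> (\<forall>i<n. \<forall>j<n. M i j = M j i) \<and>
     (\<forall>v :: nat \<Rightarrow> real. 0 \<le> (\<Sum>i<n. \<Sum>j<n. v i * M i j * v j))"

definition calC :: "nat \<Rightarrow> nat \<Rightarrow> (nat \<Rightarrow> nat \<Rightarrow> real) \<Rightarrow> bool" where
  "calC p K B \<longleftrightarrow> psd_on p B \<and> (\<forall>b<p. (\<Sum>a<p. B a b) = 1) \<and>
     (\<forall>a<p. \<forall>b<p. 0 \<le> B a b) \<and> (\<Sum>a<p. B a a) = real K"

definition unique_maximizer :: "nat \<Rightarrow> nat \<Rightarrow> (nat \<Rightarrow> nat \<Rightarrow> real) \<Rightarrow> (nat \<Rightarrow> nat \<Rightarrow> real) \<Rightarrow> bool" where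
  "unique_maximizer p K M B0 \<longleftrightarrow> calC p K B0 \<and>
     (\<forall>B. calC p K B \<longrightarrow> frob p M B \<le> frob p M B0) \<and>
     (\<forall>B. calC p K B \<and> frob p M B = frob p M B0 \<longrightarrow> (\<forall>a<p. \<forall>b<p. B a b = B0 a b))"

end

theory Submission imports Defs begin

(* The linear objective <A C A^t, B> only sees the sums of B over the blocks G_j x G_k. Since
   the rows of B sum to 1, <A C A^t, B* - B> is half the sum of (C_jj + C_kk - 2 C_jk) times these
   block sums, hence at least Delta(C)/2 times the mass of B outside the diagonal blocks.
   Gamma only sees the traces of the diagonal blocks; they sum to K, and B_ab <= (B_aa + B_bb)/2
   (positive semidefiniteness) keeps each of them above 1 - (off-diagonal mass of its row of
   blocks)/m, so <Gamma, B - B*> <= |Gamma|_V (off-diagonal mass)/m. Under either separation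
   condition a maximizer therefore has no mass off the diagonal blocks; then every block trace
   is 1, B_ab <= (B_aa + B_bb)/2 is an equality inside each block, and the row sums force B = B*. *)

lemma psd_entry_le_mean:
  assumes "psd_on n B" "a < n" "b < n"
  shows "B a b \<le> (B a a + B b b) / 2"
proof (cases "a = b")
  case True then show ?thesis by simp
next
  case False
  define v where "v j = (if j = a then 1 else if j = b then -1 else 0 :: real)" for j :: nat
  have va: "v a = 1" and vb: "v b = -1" using False by (auto simp: v_def)
  have sub: "{a, b} \<subseteq> {..<n}" using assms by auto
  have inner: "(\<Sum>j<n. v i * B i j * v j) = v i * B i a - v i * B i b" for i
  proof -
    have "(\<Sum>j<n. v i * B i j * v j) = (\<Sum>j\<in>{a,b}. v i * B i j * v j)"
      by (rule sum.mono_neutral_right) (use sub in \<open>auto simp: v_def\<close>)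
    also have "\<dots> = v i * B i a - v i * B i b" using False va vb by simp
    finally show ?thesis .
  qed
  have "0 \<le> (\<Sum>i<n. \<Sum>j<n. v i * B i j * v j)" using assms(1) unfolding psd_on_def by blast
  also have "\<dots> = (\<Sum>i<n. v i * B i a - v i * B i b)" by (simp add: inner)
  also have "\<dots> = (\<Sum>i\<in>{a,b}. v i * B i a - v i * B i b)"
    by (rule sum.mono_neutral_right) (use sub in \<open>auto simp: v_def\<close>)
  also have "\<dots> = (B a a - B a b) - (B b a - B b b)" using False va vb by simp
  finally have "0 \<le> (B a a - B a b) - (B b a - B b b)" .
  moreover have "B b a = B a b" using assms unfolding psd_on_def by auto
  ultimately show ?thesis by simp
qed

lemma sum_sum_nonneg_eq_0_iff:
  fixes f :: "'a \<Rightarrow> 'b \<Rightarrow> real"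
  assumes "finite A" "finite B" "\<forall>a\<in>A. \<forall>b\<in>B. 0 \<le> f a b"
  shows "(\<Sum>a\<in>A. \<Sum>b\<in>B. f a b) = 0 \<longleftrightarrow> (\<forall>a\<in>A. \<forall>b\<in>B. f a b = 0)"
  using assms by (simp add: sum_nonneg_eq_0_iff sum_nonneg)

lemma sum_mean_pairs:
  fixes d :: "'a \<Rightarrow> real"
  assumes "finite A"
  shows "(\<Sum>a\<in>A. \<Sum>b\<in>A. (d a + d b) / 2) = real (card A) * sum d A"
  using assms
  by (simp add: sum.distrib add_divide_distrib sum_divide_distrib[symmetric]
      sum_distrib_left[symmetric] sum.swap[of "\<lambda>a b. d b" A A])

lemma sum_mult_le_range_of_balanced:
  fixes g u w :: "'a \<Rightarrow> real"
  assumes "sum u A = 0"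
    and "\<And>k. k \<in> A \<Longrightarrow> - w k \<le> u k" "\<And>k. k \<in> A \<Longrightarrow> 0 \<le> w k"
    and "\<And>k. k \<in> A \<Longrightarrow> lo \<le> g k \<and> g k \<le> hi"
  shows "(\<Sum>k\<in>A. g k * u k) \<le> (hi - lo) * sum w A"
proof -
  have "(\<Sum>k\<in>A. g k * u k) = (\<Sum>k\<in>A. (g k - hi) * u k) + hi * sum u A"
    by (simp add: left_diff_distrib sum_subtractf sum_distrib_left)
  also have "\<dots> = (\<Sum>k\<in>A. (g k - hi) * u k)"
    using assms(1) by simp
  also have "\<dots> \<le> (\<Sum>k\<in>A. (hi - lo) * w k)"
  proof (rule sum_mono)
    fix k assume k: "k \<in> A"
    have "(g k - hi) * u k \<le> (g k - hi) * - w k"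
      using assms(2,4)[OF k] by (intro mult_left_mono_neg) auto
    also have "\<dots> = (hi - g k) * w k" by (simp add: algebra_simps)
    also have "\<dots> \<le> (hi - lo) * w k"
      using assms(3,4)[OF k] by (intro mult_right_mono) auto
    finally show "(g k - hi) * u k \<le> (hi - lo) * w k" .
  qed
  finally show ?thesis by (simp add: sum_distrib_left)
qed

lemma frob_latent_Sigma:
  "frob p (latent_Sigma K G C \<gamma>) B = frob p (ACAt K G C) B + frob p (Gamma_mat K G \<gamma>) B"
  unfolding frob_def latent_Sigma_def by (simp add: sum.distrib distrib_right)

locale group_partition =
  fixes p K :: nat and G :: "nat \<Rightarrow> nat set"
  assumes partition: "is_partition p K G"
begin

lemma group_nonempty: "k < K \<Longrightarrow> G k \<noteq> {}"
  using partition unfolding is_partition_def by auto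

lemma group_lessThan: "k < K \<Longrightarrow> a \<in> G k \<Longrightarrow> a < p"
  using partition unfolding is_partition_def by auto

lemma finite_group: "k < K \<Longrightarrow> finite (G k)"
  using group_lessThan by (meson finite_lessThan finite_subset lessThan_iff subsetI)

lemma card_group_pos: "k < K \<Longrightarrow> 0 < card (G k)"
  using group_nonempty finite_group by (simp add: card_gt_0_iff)

lemma group_unique: "j < K \<Longrightarrow> k < K \<Longrightarrow> a \<in> G j \<Longrightarrow> a \<in> G k \<Longrightarrow> j = k"
  using partition unfolding is_partition_def by blast

lemma sum_over_groups: "(\<Sum>a<p. f a) = (\<Sum>k<K. \<Sum>a\<in>G k. f a)"
proof -
  have "{..<p} = (\<Union>k<K. G k)" using partition unfolding is_partition_def by auto
  then have "(\<Sum>a<p. f a) = sum f (\<Union>(G ` {..<K}))" by simp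
  also have "\<dots> = (\<Sum>k<K. sum f (G k))"
    by (rule sum.UNION_disjoint) (auto simp: finite_group dest: group_unique)
  finally show ?thesis .
qed

definition group_of :: "nat \<Rightarrow> nat" where
  "group_of a = (SOME k. k < K \<and> a \<in> G k)"

lemma group_of: assumes "a < p" shows "group_of a < K" "a \<in> G (group_of a)"
proof -
  have "\<exists>k. k < K \<and> a \<in> G k" using partition assms unfolding is_partition_def by auto
  then have "group_of a < K \<and> a \<in> G (group_of a)" unfolding group_of_def by (rule someI_ex)
  then show "group_of a < K" "a \<in> G (group_of a)" by auto
qed

lemma group_of_eqI: "k < K \<Longrightarrow> a \<in> G k \<Longrightarrow> group_of a = k"
  using group_of group_unique group_lessThan by blast

lemma sum_memb: assumes "a < p" shows "(\<Sum>j<K. memb G a j * f j) = f (group_of a)"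
proof -
  have "(\<Sum>j<K. memb G a j * f j) = (\<Sum>j<K. if j = group_of a then f j else 0)"
    by (rule sum.cong) (auto simp: memb_def group_of assms dest: group_of_eqI)
  also have "\<dots> = f (group_of a)" using group_of[OF assms] by (simp add: sum.delta')
  finally show ?thesis .
qed

lemma ACAt_eq: "a < p \<Longrightarrow> b < p \<Longrightarrow> ACAt K G C a b = C (group_of a) (group_of b)"
  unfolding ACAt_def
  by (simp add: mult.assoc sum_distrib_left[symmetric] sum_memb mult.commute[of _ "memb G b _"])

lemma Gamma_mat_eq: "a < p \<Longrightarrow> Gamma_mat K G \<gamma> a b = (if a = b then \<gamma> (group_of a) else 0)"
  unfolding Gamma_mat_def by (simp add: sum_memb)

lemma Bstar_eq:
  assumes "k < K" "a \<in> G k" "j < K" "b \<in> G j"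
  shows "Bstar K G a b = (if k = j then 1 / real (card (G k)) else 0)"
proof -
  have "(\<exists>i<K. a \<in> G i \<and> b \<in> G i) \<longleftrightarrow> k = j"
    using assms group_unique by blast
  moreover have "(SOME i. i < K \<and> a \<in> G i \<and> b \<in> G i) = k" if "k = j"
    using assms that group_unique by (intro some_equality) auto
  ultimately show ?thesis unfolding Bstar_def by auto
qed

lemma Bstar_eq_group_of:
  "a < p \<Longrightarrow> b < p \<Longrightarrow>
    Bstar K G a b = (if group_of a = group_of b then 1 / real (card (G (group_of a))) else 0)"
  by (simp add: Bstar_eq group_of)

definition block_sum :: "(nat \<Rightarrow> nat \<Rightarrow> real) \<Rightarrow> nat \<Rightarrow> nat \<Rightarrow> real" where
  "block_sum B j k = (\<Sum>a\<in>G j. \<Sum>b\<in>G k. B a b)"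

definition group_trace :: "(nat \<Rightarrow> nat \<Rightarrow> real) \<Rightarrow> nat \<Rightarrow> real" where
  "group_trace B k = (\<Sum>a\<in>G k. B a a)"

definition block_diagonal :: "(nat \<Rightarrow> nat \<Rightarrow> real) \<Rightarrow> bool" where
  "block_diagonal B \<longleftrightarrow> (\<forall>j<K. \<forall>k<K. j \<noteq> k \<longrightarrow> block_sum B j k = 0)"

definition offdiag_block_mass :: "(nat \<Rightarrow> nat \<Rightarrow> real) \<Rightarrow> nat \<Rightarrow> real" where
  "offdiag_block_mass B k = (\<Sum>j<K. if j \<noteq> k then block_sum B k j else 0)"

definition offdiag_mass :: "(nat \<Rightarrow> nat \<Rightarrow> real) \<Rightarrow> real" where
  "offdiag_mass B = (\<Sum>k<K. offdiag_block_mass B k)"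

lemma frob_block_constant:
  assumes "\<And>a b. a < p \<Longrightarrow> b < p \<Longrightarrow> M a b = F (group_of a) (group_of b)"
  shows "frob p M B = (\<Sum>j<K. \<Sum>k<K. F j k * block_sum B j k)"
proof -
  have "frob p M B = (\<Sum>j<K. \<Sum>a\<in>G j. \<Sum>k<K. \<Sum>b\<in>G k. M a b * B a b)"
    unfolding frob_def by (simp add: sum_over_groups)
  also have "\<dots> = (\<Sum>j<K. \<Sum>a\<in>G j. \<Sum>k<K. \<Sum>b\<in>G k. F j k * B a b)"
    by (intro sum.cong refl) (simp add: assms group_lessThan group_of_eqI)
  also have "\<dots> = (\<Sum>j<K. \<Sum>k<K. \<Sum>a\<in>G j. \<Sum>b\<in>G k. F j k * B a b)"
    by (intro sum.cong refl sum.swap)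
  also have "\<dots> = (\<Sum>j<K. \<Sum>k<K. F j k * block_sum B j k)"
    unfolding block_sum_def by (simp add: sum_distrib_left)
  finally show ?thesis .
qed

lemma frob_diagonal_constant:
  assumes "\<And>a b. a < p \<Longrightarrow> M a b = (if a = b then f (group_of a) else 0)"
  shows "frob p M B = (\<Sum>k<K. f k * group_trace B k)"
proof -
  have "(\<Sum>b<p. M a b * B a b) = f (group_of a) * B a a" if "a < p" for a
    using that by (simp add: assms if_distrib if_distribR sum.delta cong: if_cong)
  then have "frob p M B = (\<Sum>a<p. f (group_of a) * B a a)"
    unfolding frob_def by simp
  also have "\<dots> = (\<Sum>k<K. \<Sum>a\<in>G k. f k * B a a)"
    unfolding sum_over_groups by (intro sum.cong refl) (simp add: group_of_eqI)
  also have "\<dots> = (\<Sum>k<K. f k * group_trace B k)"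
    unfolding group_trace_def by (simp add: sum_distrib_left)
  finally show ?thesis .
qed

lemma calC_sym: "calC p K B \<Longrightarrow> a < p \<Longrightarrow> b < p \<Longrightarrow> B a b = B b a"
  unfolding calC_def psd_on_def by blast

lemma calC_nonneg: "calC p K B \<Longrightarrow> a < p \<Longrightarrow> b < p \<Longrightarrow> 0 \<le> B a b"
  unfolding calC_def by blast

lemma calC_row_sum:
  assumes "calC p K B" "a < p"
  shows "(\<Sum>b<p. B a b) = 1"
proof -
  have "(\<Sum>b<p. B a b) = (\<Sum>b<p. B b a)"
    using assms by (intro sum.cong refl) (simp add: calC_sym)
  also have "\<dots> = 1" using assms unfolding calC_def by blast
  finally show ?thesis .
qed

lemma calC_sum_group_trace: "calC p K B \<Longrightarrow> (\<Sum>k<K. group_trace B k) = real K"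
  unfolding calC_def group_trace_def by (simp add: sum_over_groups)

lemma block_sum_nonneg: "calC p K B \<Longrightarrow> j < K \<Longrightarrow> k < K \<Longrightarrow> 0 \<le> block_sum B j k"
  unfolding block_sum_def by (intro sum_nonneg) (meson calC_nonneg group_lessThan)

lemma block_sum_sym:
  assumes "calC p K B" "j < K" "k < K"
  shows "block_sum B j k = block_sum B k j"
  unfolding block_sum_def
  by (subst sum.swap) (intro sum.cong refl; metis assms calC_sym group_lessThan)

lemma block_row_sum:
  assumes "calC p K B" "j < K"
  shows "(\<Sum>k<K. block_sum B j k) = real (card (G j))"
proof -
  have "(\<Sum>k<K. block_sum B j k) = (\<Sum>a\<in>G j. \<Sum>b<p. B a b)"
    unfolding block_sum_def sum_over_groups by (rule sum.swap)
  also have "\<dots> = (\<Sum>a\<in>G j. 1)"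
    using assms by (intro sum.cong refl calC_row_sum) (auto intro: group_lessThan)
  finally show ?thesis by simp
qed

lemma block_row_sum_split:
  assumes "k < K"
  shows "(\<Sum>j<K. block_sum B k j) = block_sum B k k + offdiag_block_mass B k"
proof -
  have "(\<Sum>j<K. block_sum B k j)
      = (\<Sum>j<K. (if j = k then block_sum B k k else 0) + (if j \<noteq> k then block_sum B k j else 0))"
    by (intro sum.cong refl) auto
  then show ?thesis
    unfolding offdiag_block_mass_def using assms by (simp add: sum.distrib)
qed

lemma offdiag_block_mass_nonneg: "calC p K B \<Longrightarrow> k < K \<Longrightarrow> 0 \<le> offdiag_block_mass B k"
  unfolding offdiag_block_mass_def by (intro sum_nonneg) (auto intro: block_sum_nonneg)

lemma diagonal_block_le:
  assumes "calC p K B" "k < K"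
  shows "block_sum B k k \<le> real (card (G k)) * group_trace B k"
proof -
  have "block_sum B k k \<le> (\<Sum>a\<in>G k. \<Sum>b\<in>G k. (B a a + B b b) / 2)"
    unfolding block_sum_def using assms
    by (intro sum_mono psd_entry_le_mean) (auto simp: calC_def intro: group_lessThan)
  also have "\<dots> = real (card (G k)) * group_trace B k"
    unfolding group_trace_def using assms(2) by (simp add: sum_mean_pairs finite_group)
  finally show ?thesis .
qed

lemma group_trace_lower:
  assumes "calC p K B" "k < K"
  shows "1 - offdiag_block_mass B k / real (card (G k)) \<le> group_trace B k"
proof -
  have "real (card (G k)) - offdiag_block_mass B k \<le> real (card (G k)) * group_trace B k"
    using block_row_sum[OF assms] block_row_sum_split[OF assms(2), of B]
      diagonal_block_le[OF assms] by linarith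
  then show ?thesis using card_group_pos[OF assms(2)] by (simp add: field_simps)
qed

lemma block_sum_Bstar_offdiag: "j < K \<Longrightarrow> k < K \<Longrightarrow> j \<noteq> k \<Longrightarrow> block_sum (Bstar K G) j k = 0"
  unfolding block_sum_def by (simp add: Bstar_eq cong: sum.cong)

lemma block_diagonal_Bstar: "block_diagonal (Bstar K G)"
  unfolding block_diagonal_def by (simp add: block_sum_Bstar_offdiag)

lemma group_trace_Bstar: "k < K \<Longrightarrow> group_trace (Bstar K G) k = 1"
  unfolding group_trace_def using card_group_pos by (simp add: Bstar_eq cong: sum.cong)

lemma Bstar_psd: "psd_on p (Bstar K G)"
proof -
  have "0 \<le> (\<Sum>a<p. \<Sum>b<p. v a * Bstar K G a b * v b)" for v :: "nat \<Rightarrow> real"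
  proof -
    have "(\<Sum>a<p. \<Sum>b<p. v a * Bstar K G a b * v b) = frob p (Bstar K G) (\<lambda>a b. v a * v b)"
      unfolding frob_def by (simp add: algebra_simps)
    also have "\<dots> = (\<Sum>j<K. \<Sum>k<K. (if j = k then 1 / real (card (G j)) else 0)
                                    * block_sum (\<lambda>a b. v a * v b) j k)"
      by (rule frob_block_constant) (simp add: Bstar_eq_group_of)
    also have "\<dots> = (\<Sum>j<K. block_sum (\<lambda>a b. v a * v b) j j / real (card (G j)))"
      by (intro sum.cong refl) (simp add: if_distrib[of "\<lambda>x. x * _"] sum.delta' cong: if_cong)
    also have "\<dots> = (\<Sum>j<K. (\<Sum>a\<in>G j. v a)\<^sup>2 / real (card (G j)))"
      unfolding block_sum_def by (simp add: power2_eq_square sum_product)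
    also have "\<dots> \<ge> 0" by (simp add: sum_nonneg)
    finally show ?thesis .
  qed
  moreover have "Bstar K G a b = Bstar K G b a" if "a < p" "b < p" for a b
    using that by (simp add: Bstar_eq_group_of)
  ultimately show ?thesis unfolding psd_on_def by blast
qed

lemma Bstar_in_calC: "calC p K (Bstar K G)"
proof -
  have "(\<Sum>a<p. Bstar K G a b) = 1" if b: "b < p" for b
  proof -
    have "(\<Sum>a<p. Bstar K G a b) = (\<Sum>k<K. if k = group_of b then (\<Sum>a\<in>G k. 1 / real (card (G k))) else 0)"
      unfolding sum_over_groups using group_of[OF b] by (intro sum.cong refl) (simp add: Bstar_eq)
    also have "\<dots> = 1" using group_of[OF b] card_group_pos[OF group_of(1)[OF b]] by simp
    finally show ?thesis .
  qed
  moreover have "(\<Sum>a<p. Bstar K G a a) = real K"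
    using group_trace_Bstar unfolding sum_over_groups group_trace_def[symmetric] by simp
  moreover have "0 \<le> Bstar K G a b" if "a < p" "b < p" for a b
    using that by (simp add: Bstar_eq_group_of)
  ultimately show ?thesis unfolding calC_def using Bstar_psd by blast
qed

lemma min_group_size:
  assumes "k < K"
  shows "0 < min_group_size K G" "min_group_size K G \<le> card (G k)"
proof -
  have fin: "finite {card (G k) | k. k < K}" by simp
  have mem: "card (G k) \<in> {card (G k) | k. k < K}" using assms by blast
  show "min_group_size K G \<le> card (G k)" unfolding min_group_size_def using fin mem by (rule Min_le)
  have "min_group_size K G \<in> {card (G k) | k. k < K}"
    unfolding min_group_size_def using fin mem by (intro Min_in) auto
  then show "0 < min_group_size K G" using card_group_pos by auto
qed

lemma Gamma_mat_diag_range: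
  assumes "k < K"
  shows "Min {Gamma_mat K G \<gamma> a a | a. a < p} \<le> \<gamma> k \<and> \<gamma> k \<le> Max {Gamma_mat K G \<gamma> a a | a. a < p}"
proof -
  obtain a where a: "a \<in> G k" using group_nonempty[OF assms] by blast
  then have "a < p" "Gamma_mat K G \<gamma> a a = \<gamma> k"
    using assms by (auto simp: Gamma_mat_eq group_lessThan group_of_eqI)
  then have "\<gamma> k \<in> {Gamma_mat K G \<gamma> a a | a. a < p}" by force
  then show ?thesis by simp
qed

lemma frob_Gamma_mat_excess:
  assumes "calC p K B"
  shows "frob p (Gamma_mat K G \<gamma>) B - frob p (Gamma_mat K G \<gamma>) (Bstar K G)
         \<le> var_norm p (Gamma_mat K G \<gamma>) * offdiag_mass B / real (min_group_size K G)"
proof -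
  define m where "m = real (min_group_size K G)"
  have "frob p (Gamma_mat K G \<gamma>) B - frob p (Gamma_mat K G \<gamma>) (Bstar K G)
      = (\<Sum>k<K. \<gamma> k * (group_trace B k - 1))"
    by (simp add: frob_diagonal_constant Gamma_mat_eq group_trace_Bstar sum_subtractf
        right_diff_distrib)
  also have "\<dots> \<le> var_norm p (Gamma_mat K G \<gamma>) * (\<Sum>k<K. offdiag_block_mass B k / m)"
    unfolding var_norm_def
  proof (rule sum_mult_le_range_of_balanced)
    show "(\<Sum>k<K. group_trace B k - 1) = 0"
      using calC_sum_group_trace[OF assms] by (simp add: sum_subtractf)
  next
    fix k assume "k \<in> {..<K}"
    then have k: "k < K" by simp
    have "offdiag_block_mass B k / real (card (G k)) \<le> offdiag_block_mass B k / m"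
      unfolding m_def using min_group_size[OF k] offdiag_block_mass_nonneg[OF assms k]
      by (intro divide_left_mono) auto
    then show "- (offdiag_block_mass B k / m) \<le> group_trace B k - 1"
      using group_trace_lower[OF assms k] by linarith
    show "0 \<le> offdiag_block_mass B k / m"
      unfolding m_def using offdiag_block_mass_nonneg[OF assms k] by simp
  qed (rule Gamma_mat_diag_range, simp)
  finally show ?thesis
    unfolding offdiag_mass_def m_def by (simp add: sum_divide_distrib[symmetric])
qed

definition latent_separation :: "(nat \<Rightarrow> nat \<Rightarrow> real) \<Rightarrow> (nat \<Rightarrow> nat \<Rightarrow> real) \<Rightarrow> real" where
  "latent_separation C B = (\<Sum>j<K. \<Sum>k<K. (C j j + C k k - 2 * C j k) * block_sum B j k)"

lemma frob_ACAt:
  assumes "calC p K B"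
  shows "frob p (ACAt K G C) B = (\<Sum>j<K. C j j * real (card (G j))) - latent_separation C B / 2"
proof -
  have rows: "(\<Sum>j<K. C j j * real (card (G j))) = (\<Sum>j<K. \<Sum>k<K. C j j * block_sum B j k)"
    by (intro sum.cong refl) (simp add: block_row_sum[OF assms] flip: sum_distrib_left)
  have "(\<Sum>j<K. \<Sum>k<K. C k k * block_sum B j k) = (\<Sum>k<K. \<Sum>j<K. C k k * block_sum B j k)"
    by (rule sum.swap)
  also have "\<dots> = (\<Sum>k<K. \<Sum>j<K. C k k * block_sum B k j)"
    using assms by (intro sum.cong refl) (simp add: block_sum_sym)
  finally have cols: "(\<Sum>j<K. C j j * real (card (G j))) = (\<Sum>j<K. \<Sum>k<K. C k k * block_sum B j k)"
    using rows by simp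
  have "frob p (ACAt K G C) B = (\<Sum>j<K. \<Sum>k<K. C j k * block_sum B j k)"
    by (rule frob_block_constant) (simp add: ACAt_eq)
  moreover have "latent_separation C B = (\<Sum>j<K. \<Sum>k<K. C j j * block_sum B j k)
      + (\<Sum>j<K. \<Sum>k<K. C k k * block_sum B j k) - 2 * (\<Sum>j<K. \<Sum>k<K. C j k * block_sum B j k)"
    unfolding latent_separation_def
    by (simp add: left_diff_distrib distrib_right sum.distrib sum_subtractf sum_distrib_left mult.assoc)
  ultimately show ?thesis using rows cols by linarith
qed

lemma latent_separation_block_diagonal:
  assumes "block_diagonal B"
  shows "latent_separation C B = 0"
proof -
  have "(C j j + C k k - 2 * C j k) * block_sum B j k = 0" if "j < K" "k < K" for j k
    using that assms by (cases "j = k") (auto simp: block_diagonal_def)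
  then show ?thesis unfolding latent_separation_def by (intro sum.neutral ballI) simp
qed

lemma latent_separation_excess:
  "latent_separation C B - t * offdiag_mass B
    = (\<Sum>j<K. \<Sum>k<K. if j = k then 0 else (C j j + C k k - 2 * C j k - t) * block_sum B j k)"
  unfolding latent_separation_def offdiag_mass_def offdiag_block_mass_def
  by (simp add: sum_distrib_left sum_subtractf[symmetric] if_distrib[of "\<lambda>x. t * x"])
    (intro sum.cong refl; auto simp: algebra_simps)

lemma Delta_gt_pair:
  assumes "Delta_gt K C t" "\<forall>j<K. \<forall>k<K. C j k = C k j" "j < K" "k < K" "j \<noteq> k"
  shows "t < C j j + C k k - 2 * C j k"
proof (cases "j < k")
  case True
  then show ?thesis using assms unfolding Delta_gt_def by blast
next
  case False
  then have "t < C k k + C j j - 2 * C k j"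
    using assms unfolding Delta_gt_def by (metis linorder_neqE_nat)
  then show ?thesis using assms by simp
qed

lemma latent_separation_lower:
  assumes "calC p K B" "Delta_gt K C t" "\<forall>j<K. \<forall>k<K. C j k = C k j"
  shows "t * offdiag_mass B \<le> latent_separation C B"
    and "latent_separation C B \<le> t * offdiag_mass B \<Longrightarrow> block_diagonal B"
proof -
  define e where
    "e j k = (if j = k then 0 else (C j j + C k k - 2 * C j k - t) * block_sum B j k)" for j k
  have e_nonneg: "\<forall>j\<in>{..<K}. \<forall>k\<in>{..<K}. 0 \<le> e j k"
    unfolding e_def using Delta_gt_pair[OF assms(2,3)] block_sum_nonneg[OF assms(1)]
    by (auto intro!: mult_nonneg_nonneg simp: less_imp_le)
  have excess: "latent_separation C B - t * offdiag_mass B = (\<Sum>j<K. \<Sum>k<K. e j k)"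
    unfolding e_def by (rule latent_separation_excess)
  have "0 \<le> (\<Sum>j<K. \<Sum>k<K. e j k)" using e_nonneg by (intro sum_nonneg) auto
  then show "t * offdiag_mass B \<le> latent_separation C B" using excess by linarith
  assume "latent_separation C B \<le> t * offdiag_mass B"
  with excess \<open>0 \<le> (\<Sum>j<K. \<Sum>k<K. e j k)\<close> have "(\<Sum>j<K. \<Sum>k<K. e j k) = 0" by linarith
  then have "\<forall>j\<in>{..<K}. \<forall>k\<in>{..<K}. e j k = 0"
    using sum_sum_nonneg_eq_0_iff[OF finite_lessThan finite_lessThan e_nonneg] by blast
  then show "block_diagonal B"
    unfolding block_diagonal_def
  proof (intro allI impI)
    fix j k assume jk: "j < K" "k < K" "j \<noteq> k"
    then have "e j k = 0" using \<open>\<forall>j\<in>{..<K}. \<forall>k\<in>{..<K}. e j k = 0\<close> by simp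
    then have "(C j j + C k k - 2 * C j k - t) * block_sum B j k = 0"
      using jk unfolding e_def by simp
    then show "block_sum B j k = 0" using Delta_gt_pair[OF assms(2,3) jk] by simp
  qed
qed

lemma block_diagonal_offdiag_block_mass:
  "block_diagonal B \<Longrightarrow> k < K \<Longrightarrow> offdiag_block_mass B k = 0"
  unfolding block_diagonal_def offdiag_block_mass_def by (intro sum.neutral) auto

lemma block_diagonal_group_trace:
  assumes "calC p K B" "block_diagonal B" "k < K"
  shows "group_trace B k = 1"
proof -
  have ge: "\<forall>k\<in>{..<K}. 0 \<le> group_trace B k - 1"
    using group_trace_lower[OF assms(1)] block_diagonal_offdiag_block_mass[OF assms(2)] by auto
  have "(\<Sum>k<K. group_trace B k - 1) = 0"
    using calC_sum_group_trace[OF assms(1)] by (simp add: sum_subtractf)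
  then show ?thesis
    using sum_nonneg_eq_0_iff[of "{..<K}" "\<lambda>k. group_trace B k - 1"] ge assms(3) by simp
qed

lemma block_diagonal_off_group:
  assumes "calC p K B" "block_diagonal B" "j < K" "k < K" "j \<noteq> k" "a \<in> G j" "b \<in> G k"
  shows "B a b = 0"
proof -
  have "\<forall>a\<in>G j. \<forall>b\<in>G k. 0 \<le> B a b"
    using assms(1,3,4) by (auto intro: calC_nonneg group_lessThan)
  moreover have "(\<Sum>a\<in>G j. \<Sum>b\<in>G k. B a b) = 0"
    using assms(2-5) unfolding block_diagonal_def block_sum_def by simp
  ultimately show ?thesis
    using sum_sum_nonneg_eq_0_iff[OF finite_group[OF assms(3)] finite_group[OF assms(4)]] assms(6,7)
    by simp
qed

lemma block_diagonal_entry_eq_mean: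
  assumes "calC p K B" "block_diagonal B" "k < K" "a \<in> G k" "b \<in> G k"
  shows "B a b = (B a a + B b b) / 2"
proof -
  define f where "f a b = (B a a + B b b) / 2 - B a b" for a b
  have f_nonneg: "\<forall>a\<in>G k. \<forall>b\<in>G k. 0 \<le> f a b"
    unfolding f_def using assms(1,3) psd_entry_le_mean group_lessThan
    by (fastforce simp: calC_def)
  have "block_sum B k k = real (card (G k))"
    using block_row_sum[OF assms(1,3)] block_row_sum_split[OF assms(3)]
      block_diagonal_offdiag_block_mass[OF assms(2,3)] by simp
  then have "(\<Sum>a\<in>G k. \<Sum>b\<in>G k. f a b) = 0"
    unfolding f_def block_sum_def
    using block_diagonal_group_trace[OF assms(1-3)] finite_group[OF assms(3)]
    by (simp add: sum_subtractf sum_mean_pairs group_trace_def)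
  then show ?thesis
    using sum_sum_nonneg_eq_0_iff[OF finite_group finite_group f_nonneg] assms(3-5)
    unfolding f_def by simp
qed

lemma block_diagonal_in_group:
  assumes "calC p K B" "block_diagonal B" "k < K" "a \<in> G k" "b \<in> G k"
  shows "B a b = 1 / real (card (G k))"
proof -
  have diag: "B c c = 1 / real (card (G k))" if c: "c \<in> G k" for c
  proof -
    have "1 = (\<Sum>j<K. \<Sum>b\<in>G j. B c b)"
      using calC_row_sum[OF assms(1) group_lessThan[OF assms(3) c]] by (simp add: sum_over_groups)
    also have "\<dots> = (\<Sum>j<K. if j = k then (\<Sum>b\<in>G k. B c b) else 0)"
      using block_diagonal_off_group[OF assms(1,2) assms(3) _ _ c]
      by (intro sum.cong refl) (auto intro!: sum.neutral)
    also have "\<dots> = (\<Sum>b\<in>G k. B c b)" using assms(3) by simp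
    also have "\<dots> = (\<Sum>b\<in>G k. (B c c + B b b) / 2)"
      by (rule sum.cong[OF refl]) (rule block_diagonal_entry_eq_mean[OF assms(1-3) c])
    also have "\<dots> = (real (card (G k)) * B c c + group_trace B k) / 2"
      unfolding group_trace_def by (simp add: sum.distrib add_divide_distrib sum_divide_distrib)
    finally show ?thesis
      using block_diagonal_group_trace[OF assms(1-3)] card_group_pos[OF assms(3)]
      by (simp add: field_simps)
  qed
  show ?thesis
    using block_diagonal_entry_eq_mean[OF assms] diag assms(4,5) by simp
qed

lemma block_diagonal_eq_Bstar:
  assumes "calC p K B" "block_diagonal B" "a < p" "b < p"
  shows "B a b = Bstar K G a b"
proof (cases "group_of a = group_of b")
  case True
  then show ?thesis
    using block_diagonal_in_group[OF assms(1,2) group_of[OF assms(3)]] group_of(2)[OF assms(4)] assms(3,4)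
    by (simp add: Bstar_eq_group_of)
next
  case False
  then show ?thesis
    using block_diagonal_off_group[OF assms(1,2) group_of(1)[OF assms(3)] group_of(1)[OF assms(4)] False
        group_of(2)[OF assms(3)] group_of(2)[OF assms(4)]] assms(3,4)
    by (simp add: Bstar_eq_group_of)
qed

lemma unique_maximizer_BstarI:
  assumes "\<And>B. calC p K B \<Longrightarrow> frob p M B \<le> frob p M (Bstar K G)"
    and "\<And>B. calC p K B \<Longrightarrow> frob p M B = frob p M (Bstar K G) \<Longrightarrow> block_diagonal B"
  shows "unique_maximizer p K M (Bstar K G)"
  unfolding unique_maximizer_def using assms Bstar_in_calC block_diagonal_eq_Bstar by blast

lemma frob_ACAt_Bstar_minus:
  "calC p K B \<Longrightarrow> frob p (ACAt K G C) (Bstar K G) - frob p (ACAt K G C) B = latent_separation C B / 2"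
  using frob_ACAt Bstar_in_calC latent_separation_block_diagonal[OF block_diagonal_Bstar] by simp

lemma ACAt_unique_maximizer:
  assumes "\<forall>j<K. \<forall>k<K. C j k = C k j" "Delta_gt K C 0"
  shows "unique_maximizer p K (ACAt K G C) (Bstar K G)"
proof (rule unique_maximizer_BstarI)
  fix B assume B: "calC p K B"
  note separation = latent_separation_lower[OF B assms(2,1)]
  show "frob p (ACAt K G C) B \<le> frob p (ACAt K G C) (Bstar K G)"
    using separation(1) frob_ACAt_Bstar_minus[OF B, of C] by simp
  assume "frob p (ACAt K G C) B = frob p (ACAt K G C) (Bstar K G)"
  then show "block_diagonal B" using frob_ACAt_Bstar_minus[OF B, of C] by (intro separation(2)) simp
qed

lemma latent_Sigma_unique_maximizer:
  assumes "\<forall>j<K. \<forall>k<K. C j k = C k j"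
    and "Delta_gt K C (2 / real (min_group_size K G) * var_norm p (Gamma_mat K G \<gamma>))"
  shows "unique_maximizer p K (latent_Sigma K G C \<gamma>) (Bstar K G)"
proof (rule unique_maximizer_BstarI)
  define t where "t = 2 / real (min_group_size K G) * var_norm p (Gamma_mat K G \<gamma>)"
  fix B assume B: "calC p K B"
  have excess: "(latent_separation C B - t * offdiag_mass B) / 2
      \<le> frob p (latent_Sigma K G C \<gamma>) (Bstar K G) - frob p (latent_Sigma K G C \<gamma>) B"
    using frob_ACAt_Bstar_minus[OF B, of C] frob_Gamma_mat_excess[OF B, of \<gamma>]
      frob_latent_Sigma[of p K G C \<gamma> B] frob_latent_Sigma[of p K G C \<gamma> "Bstar K G"]
    unfolding t_def by simp
  note separation = latent_separation_lower[OF B assms(2)[folded t_def] assms(1)]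
  show "frob p (latent_Sigma K G C \<gamma>) B \<le> frob p (latent_Sigma K G C \<gamma>) (Bstar K G)"
    using excess separation(1) by argo
  assume "frob p (latent_Sigma K G C \<gamma>) B = frob p (latent_Sigma K G C \<gamma>) (Bstar K G)"
  then show "block_diagonal B" using excess by (intro separation(2)) argo
qed

end

theorem mainTheorem4:
  fixes p K :: nat and G :: "nat \<Rightarrow> nat set"
    and C :: "nat \<Rightarrow> nat \<Rightarrow> real" and \<gamma> :: "nat \<Rightarrow> real"
  assumes part: "is_partition p K G"
    and C_cov: "psd_on K C"
    and gamma_nonneg: "\<forall>k<K. 0 \<le> \<gamma> k"
  shows "(Delta_gt K C (2 / real (min_group_size K G) * var_norm p (Gamma_mat K G \<gamma>))
            \<longrightarrow> unique_maximizer p K (latent_Sigma K G C \<gamma>) (Bstar K G))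
       \<and> (Delta_gt K C 0
            \<longrightarrow> unique_maximizer p K (\<lambda>a b. latent_Sigma K G C \<gamma> a b - Gamma_mat K G \<gamma> a b) (Bstar K G))"
proof -
  interpret group_partition p K G by (rule group_partition.intro) (rule part)
  have C_sym: "\<forall>j<K. \<forall>k<K. C j k = C k j" using C_cov unfolding psd_on_def by blast
  have "(\<lambda>a b. latent_Sigma K G C \<gamma> a b - Gamma_mat K G \<gamma> a b) = ACAt K G C"
    by (simp add: latent_Sigma_def)
  then show ?thesis
    using latent_Sigma_unique_maximizer[OF C_sym] ACAt_unique_maximizer[OF C_sym] by simp
qed

end
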